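(* Let $G=(V,E)$ be a graph with maximum degree at most $\Delta$, let $\beta>20$ with $L=\log_\beta\Delta$ an integer, let $\ell:V\to\{4,\dots,L\}$ be any level assignment, and let $\chi:V\to\mathcal{C}=\{1,\dots,\Delta+1\}$ be any coloring. For any vertex $x$ with $\ell(x)=i$, we have $|B_x\cup U_x|\ge 1+\frac{|\mathcal{N}_x(4,i-1)|}{2}$.
   Context: For a vertex $v$ and $i\le j$, $\mathcal{N}_v(i,j)=\{u:(u,v)\in E,\ i\le\ell(u)\le j\}$ (empty if $i>j$). For a vertex $x$ at level $i=\ell(x)$: $\mathcal{C}^+_x=\{\chi(y): y\in\mathcal{N}_x(i,L)\}$ and $\mathcal{C}_x=\mathcal{C}\setminus\mathcal{C}^+_x$. A color $c\in\mathcal{C}_x$ is blank for $x$ if no vertex of $\mathcal{N}_x(4,i-1)$ has color $c$, and unique for $x$ if exactly one vertex of $\mathcal{N}_x(4,i-1)$ has color $c$. $B_x$ and $U_x$ denote the sets of blank and unique colors for $x$, respectively. *)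

theory Defs
  imports Complex_Main
begin

definition simple_graph :: "'a set \<Rightarrow> ('a \<times> 'a) set \<Rightarrow> bool" where
  "simple_graph V E \<longleftrightarrow> finite V \<and> E \<subseteq> V \<times> V \<and> sym E \<and> irrefl E"

definition degree :: "('a \<times> 'a) set \<Rightarrow> 'a \<Rightarrow> nat" where
  "degree E v = card {u. (u, v) \<in> E}"

definition nbhd :: "('a \<times> 'a) set \<Rightarrow> ('a \<Rightarrow> int) \<Rightarrow> 'a \<Rightarrow> int \<Rightarrow> int \<Rightarrow> 'a set" where
  "nbhd E lev v i j = {u. (u, v) \<in> E \<and> i \<le> lev u \<and> lev u \<le> j}"

definition Cplus :: "('a \<times> 'a) set \<Rightarrow> ('a \<Rightarrow> int) \<Rightarrow> int \<Rightarrow> ('a \<Rightarrow> nat) \<Rightarrow> 'a \<Rightarrow> nat set" where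
  "Cplus E lev L \<chi> x = \<chi> ` nbhd E lev x (lev x) L"

definition Cfree :: "nat \<Rightarrow> ('a \<times> 'a) set \<Rightarrow> ('a \<Rightarrow> int) \<Rightarrow> int \<Rightarrow> ('a \<Rightarrow> nat) \<Rightarrow> 'a \<Rightarrow> nat set" where
  "Cfree \<Delta> E lev L \<chi> x = {1..\<Delta>+1} - Cplus E lev L \<chi> x"

definition blank_colors :: "nat \<Rightarrow> ('a \<times> 'a) set \<Rightarrow> ('a \<Rightarrow> int) \<Rightarrow> int \<Rightarrow> ('a \<Rightarrow> nat) \<Rightarrow> 'a \<Rightarrow> nat set" where
  "blank_colors \<Delta> E lev L \<chi> x =
     {c \<in> Cfree \<Delta> E lev L \<chi> x. card {y \<in> nbhd E lev x 4 (lev x - 1). \<chi> y = c} = 0}"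

definition unique_colors :: "nat \<Rightarrow> ('a \<times> 'a) set \<Rightarrow> ('a \<Rightarrow> int) \<Rightarrow> int \<Rightarrow> ('a \<Rightarrow> nat) \<Rightarrow> 'a \<Rightarrow> nat set" where
  "unique_colors \<Delta> E lev L \<chi> x =
     {c \<in> Cfree \<Delta> E lev L \<chi> x. card {y \<in> nbhd E lev x 4 (lev x - 1). \<chi> y = c} = 1}"

end

theory Submission
  imports Defs
begin

text \<open>A colour is neither blank nor unique for \<open>x\<close> exactly when it is repeated among the
  lower neighbours \<open>A = \<N>\<^sub>x(4, i-1)\<close>, and each repeated colour uses up at least two vertices
  of \<open>A\<close>, so at most \<open>|A|/2\<close> colours are repeated. The colours of the upper neighbours
  \<open>\<N>\<^sub>x(i, L)\<close> exclude at most \<open>|\<N>\<^sub>x(i, L)| \<le> \<Delta> - |A|\<close> of the \<open>\<Delta> + 1\<close> colours, which leaves at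
  least \<open>1 + |A| - |A|/2\<close> blank or unique ones.\<close>

lemma finite_nbhd:
  assumes "simple_graph V E"
  shows "finite (nbhd E lev v i j)"
proof (rule finite_subset)
  show "nbhd E lev v i j \<subseteq> V"
    using assms unfolding simple_graph_def nbhd_def by auto
  show "finite V"
    using assms unfolding simple_graph_def by simp
qed

lemma card_nbhd_disjoint_levels_le_degree:
  assumes "simple_graph V E" and "j < i'"
  shows "card (nbhd E lev v i j) + card (nbhd E lev v i' j') \<le> degree E v"
proof -
  have "finite {u. (u, v) \<in> E}"
    using assms(1) unfolding simple_graph_def by (auto intro: finite_subset[of _ V])
  have "card (nbhd E lev v i j) + card (nbhd E lev v i' j')
      = card (nbhd E lev v i j \<union> nbhd E lev v i' j')"
    using assms by (intro card_Un_disjoint[symmetric] finite_nbhd) (auto simp: nbhd_def)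
  also have "\<dots> \<le> degree E v"
    unfolding degree_def using \<open>finite {u. (u, v) \<in> E}\<close>
    by (intro card_mono) (auto simp: nbhd_def)
  finally show ?thesis .
qed

lemma card_Cfree_ge:
  assumes "finite (nbhd E lev x (lev x) L)"
  shows "\<Delta> + 1 - card (nbhd E lev x (lev x) L) \<le> card (Cfree \<Delta> E lev L \<chi> x)"
proof -
  have "\<Delta> + 1 - card (Cplus E lev L \<chi> x) \<le> card (Cfree \<Delta> E lev L \<chi> x)"
    unfolding Cfree_def using diff_card_le_card_Diff[of "Cplus E lev L \<chi> x" "{1..\<Delta>+1}"]
    by (simp add: Cplus_def assms)
  moreover have "card (Cplus E lev L \<chi> x) \<le> card (nbhd E lev x (lev x) L)"
    unfolding Cplus_def using assms by (rule card_image_le)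
  ultimately show ?thesis by linarith
qed

lemma finite_repeated_values:
  assumes "finite A"
  shows "finite {c. 2 \<le> card {y \<in> A. f y = c}}"
proof (rule finite_subset)
  show "{c. 2 \<le> card {y \<in> A. f y = c}} \<subseteq> f ` A"
  proof
    fix c
    assume "c \<in> {c. 2 \<le> card {y \<in> A. f y = c}}"
    then have "{y \<in> A. f y = c} \<noteq> {}"
      by (metis (no_types, lifting) card.empty mem_Collect_eq not_numeral_le_zero)
    then show "c \<in> f ` A"
      by blast
  qed
qed (use assms in simp)

lemma card_repeated_values_le:
  assumes "finite A"
  shows "2 * card {c. 2 \<le> card {y \<in> A. f y = c}} \<le> card A"
proof -
  define R where "R = {c. 2 \<le> card {y \<in> A. f y = c}}"
  have "finite R"
    unfolding R_def using assms by (rule finite_repeated_values)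
  have "2 * card R = (\<Sum>c\<in>R. 2)"
    by simp
  also have "\<dots> \<le> (\<Sum>c\<in>R. card {y \<in> A. f y = c})"
    by (rule sum_mono) (simp add: R_def)
  also have "\<dots> = card (\<Union>c\<in>R. {y \<in> A. f y = c})"
    using \<open>finite R\<close> assms by (intro card_UN_disjoint[symmetric]) auto
  also have "\<dots> \<le> card A"
    using assms by (intro card_mono) auto
  finally show ?thesis
    unfolding R_def .
qed

lemma blank_Un_unique_colors:
  "blank_colors \<Delta> E lev L \<chi> x \<union> unique_colors \<Delta> E lev L \<chi> x
     = Cfree \<Delta> E lev L \<chi> x - {c. 2 \<le> card {y \<in> nbhd E lev x 4 (lev x - 1). \<chi> y = c}}"
  unfolding blank_colors_def unique_colors_def by auto

theorem claim2:
  fixes V :: "'a set" and E :: "('a \<times> 'a) set" and \<Delta> :: nat and \<beta> :: real and L :: int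
    and lev :: "'a \<Rightarrow> int" and \<chi> :: "'a \<Rightarrow> nat" and x :: 'a
  assumes "simple_graph V E"
    and "\<forall>v\<in>V. degree E v \<le> \<Delta>"
    and "\<beta> > 20"
    and "real_of_int L = log \<beta> (real \<Delta>)"
    and "\<forall>v\<in>V. lev v \<in> {4..L}"
    and "\<forall>v\<in>V. \<chi> v \<in> {1..\<Delta>+1}"
    and "x \<in> V"
  shows "real (card (blank_colors \<Delta> E lev L \<chi> x \<union> unique_colors \<Delta> E lev L \<chi> x))
           \<ge> 1 + real (card (nbhd E lev x 4 (lev x - 1))) / 2"
proof -
  define A where "A = nbhd E lev x 4 (lev x - 1)"
  define P where "P = nbhd E lev x (lev x) L"
  define R where "R = {c. 2 \<le> card {y \<in> A. \<chi> y = c}}"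
  have "card A + card P \<le> \<Delta>"
    using card_nbhd_disjoint_levels_le_degree[OF assms(1), of "lev x - 1" "lev x" lev x 4 L]
      assms(2,7)
    unfolding A_def P_def by fastforce
  moreover have "\<Delta> + 1 - card P \<le> card (Cfree \<Delta> E lev L \<chi> x)"
    unfolding P_def using finite_nbhd[OF assms(1)] by (rule card_Cfree_ge)
  moreover have "2 * card R \<le> card A"
    unfolding R_def A_def using finite_nbhd[OF assms(1)] by (rule card_repeated_values_le)
  moreover have "card (Cfree \<Delta> E lev L \<chi> x) - card R \<le> card (Cfree \<Delta> E lev L \<chi> x - R)"
    unfolding R_def A_def using finite_nbhd[OF assms(1)]
    by (intro diff_card_le_card_Diff finite_repeated_values)
  ultimately have "2 + card A \<le> 2 * card (Cfree \<Delta> E lev L \<chi> x - R)"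
    by linarith
  then show ?thesis
    unfolding blank_Un_unique_colors A_def[symmetric] R_def[symmetric] by linarith
qed

end
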